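(* Let $k\ge2$ be even, let $p\ge2$ be an integer, and let $G=C(p,p,\dots,p)$ ($k$ entries, all equal to $p$). Then the number $m(G)$ of distinct Laplacian eigenvalues of $G$ equals $k+1$.
   Context: $C(\alpha_1,\dots,\alpha_k)$ is defined recursively by $C(\alpha_1)=\overline{K_{\alpha_1}}$ (edgeless graph) and $C(\alpha_1,\dots,\alpha_i)=\overline{C(\alpha_1,\dots,\alpha_{i-1})\cup K_{\alpha_i}}$ for $i=2,\dots,k$ (disjoint union, then complement). Equivalently for $k$ even, with $\pi_i$ the $\alpha_i$ vertices introduced at step $i$: $\pi_i$ is a clique for $i$ odd, independent for $i$ even, and for $i<j$ vertices of $\pi_i,\pi_j$ are adjacent iff $j$ is even. Laplacian eigenvalues are those of $L=D-A$. *)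

theory Defs
  imports "Jordan_Normal_Form.Char_Poly"
begin

text \<open>Vertices of C(as) (as = [alpha_1,...,alpha_k]): pairs (i,j) with i < k the step
 (0-based, so step i here is step i+1 in the paper) and j < as!i.\<close>

definition C_vertices :: "nat list \<Rightarrow> (nat \<times> nat) set" where
  "C_vertices as = {(i, j). i < length as \<and> j < as ! i}"

text \<open>Adjacency of the graph C(alpha_1,...,alpha_m) built from the first m steps,
 following the recursive definition: C(alpha_1) is edgeless, and
 C(alpha_1..alpha_(i+1)) is the complement of the disjoint union of
 C(alpha_1..alpha_i) with the clique on the new step's vertices.\<close>

fun C_adj_prefix :: "nat list \<Rightarrow> nat \<Rightarrow> nat \<times> nat \<Rightarrow> nat \<times> nat \<Rightarrow> bool" where
  "C_adj_prefix as 0 u v = False"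
| "C_adj_prefix as (Suc 0) u v = False"
| "C_adj_prefix as (Suc (Suc i)) u v =
     (u \<noteq> v \<and>
      \<not> (if fst u \<le> i \<and> fst v \<le> i then C_adj_prefix as (Suc i) u v
         else if fst u = Suc i \<and> fst v = Suc i then True
         else False))"

definition C_adj :: "nat list \<Rightarrow> nat \<times> nat \<Rightarrow> nat \<times> nat \<Rightarrow> bool" where
  "C_adj as u v = (u \<in> C_vertices as \<and> v \<in> C_vertices as \<and> C_adj_prefix as (length as) u v)"

definition C_vlist :: "nat list \<Rightarrow> (nat \<times> nat) list" where
  "C_vlist as = concat (map (\<lambda>i. map (\<lambda>j. (i, j)) [0..<as ! i]) [0..<length as])"

definition C_degree :: "nat list \<Rightarrow> nat \<times> nat \<Rightarrow> nat" where
  "C_degree as u = card {v \<in> C_vertices as. C_adj as u v}"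

definition C_laplacian :: "nat list \<Rightarrow> real mat" where
  "C_laplacian as =
     (let vs = C_vlist as; n = length vs in
      mat n n (\<lambda>(a, b). if a = b then real (C_degree as (vs ! a))
                        else if C_adj as (vs ! a) (vs ! b) then -1 else 0))"

text \<open>Number of distinct Laplacian eigenvalues (the Laplacian is real symmetric,
 so all its eigenvalues are real).\<close>

definition m_lap :: "nat list \<Rightarrow> nat" where
  "m_lap as = card {x. eigenvalue (C_laplacian as) x}"

end

theory Submission
  imports Defs
begin

text \<open>
  Write the vertices of C(p, ..., p) as pairs (t, j) of a step t < k and a position j < p.
  For k even the Laplacian acts blockwise: steps are cliques or independent sets and two steps
  are either completely joined or not joined at all. A vector supported on one step t and summing
  to zero there is an eigenvector for p times the number of steps joined to t (t included when it
  is a clique), and these numbers exhaust 2, ..., k - 1 (and 1 when k = 2). Vectors constant on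
  each step reduce the Laplacian to p times the Laplacian of the k-vertex step graph, which gives
  the eigenvalues 0, p and k p. Conversely, for an eigenvalue \<mu> that is not of the form j p with
  j \<le> k, an eigenvector must be constant on every step, and peeling off the last two steps shows
  that the step graph has no eigenvalue outside {0, ..., k}. So the spectrum is {j p | j \<le> k}.
\<close>

section \<open>The step graph\<close>

text \<open>With k even and steps numbered from 0, step t is a clique iff t is even, and two different
  steps are completely joined iff the later one is odd (\<open>C_adj_iff\<close> below).\<close>

definition step_adj :: "nat \<Rightarrow> nat \<Rightarrow> bool" where
  "step_adj t s = (if t = s then even t else odd (max t s))"

lemma step_adj_sym: "step_adj t s = step_adj s t"
  unfolding step_adj_def by (auto simp: max.commute)

lemma step_adj_below_even: "t < s \<Longrightarrow> even s \<Longrightarrow> \<not> step_adj t s"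
  and step_adj_below_odd: "t < s \<Longrightarrow> odd s \<Longrightarrow> step_adj t s"
  unfolding step_adj_def by (simp_all add: max_def)

definition step_laplacian :: "nat \<Rightarrow> (nat \<Rightarrow> real) \<Rightarrow> nat \<Rightarrow> real" where
  "step_laplacian k c t = (\<Sum>s<k. if step_adj t s then c t - c s else 0)"

lemma sum_step_laplacian: "(\<Sum>t<k. step_laplacian k c t) = 0"
proof -
  have "(\<Sum>t<k. step_laplacian k c t)
      = (\<Sum>t<k. \<Sum>s<k. if step_adj t s then c t else 0)
        - (\<Sum>t<k. \<Sum>s<k. if step_adj t s then c s else 0)"
    unfolding step_laplacian_def
    by (simp add: sum_subtractf[symmetric] if_distrib if_distribR cong: if_cong)
  also have "(\<Sum>t<k. \<Sum>s<k. if step_adj t s then c s else 0)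
      = (\<Sum>s<k. \<Sum>t<k. if step_adj t s then c s else 0)"
    by (rule sum.swap)
  also have "\<dots> = (\<Sum>t<k. \<Sum>s<k. if step_adj t s then c t else 0)"
    by (simp add: step_adj_sym)
  finally show ?thesis by simp
qed

lemma step_laplacian_Suc_Suc:
  assumes "t < 2 * m"
  shows "step_laplacian (2 * m + 2) c t = step_laplacian (2 * m) c t + (c t - c (2 * m + 1))"
  using assms step_adj_below_even[of t "2 * m"] step_adj_below_odd[of t "2 * m + 1"]
  by (simp add: step_laplacian_def)

text \<open>The last step is joined to all others and the one before it only to the last. Hence an
  eigenvector for an eigenvalue outside {0, ..., 2 m} vanishes on these two steps, and on the
  remaining ones it is an eigenvector for the eigenvalue decreased by 1.\<close>

lemma step_laplacian_eigen_imp_zero: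
  assumes "\<And>t. t < 2 * m \<Longrightarrow> step_laplacian (2 * m) c t = x * c t"
    and "\<And>j. j \<le> 2 * m \<Longrightarrow> x \<noteq> real j"
    and "t < 2 * m"
  shows "c t = 0"
  using assms
proof (induction m arbitrary: x t)
  case 0
  then show ?case by simp
next
  case (Suc m)
  let ?K = "2 * m + 2"
  have "2 * Suc m = ?K" by simp
  note eigen = Suc.prems(1)[unfolded this]
  have "x * (\<Sum>t<?K. c t) = (\<Sum>t<?K. step_laplacian ?K c t)"
    unfolding sum_distrib_left using eigen by (intro sum.cong) auto
  then have sum_zero: "(\<Sum>t<?K. c t) = 0"
    using sum_step_laplacian[of ?K c] Suc.prems(2)[of 0] by simp
  have "step_laplacian ?K c (2 * m + 1) = (\<Sum>s<2 * m + 1. c (2 * m + 1) - c s)"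
    by (simp add: step_laplacian_def step_adj_def max_def)
  also have "\<dots> = real ?K * c (2 * m + 1)"
    using sum_zero by (simp add: sum_subtractf algebra_simps)
  finally have "(real ?K - x) * c (2 * m + 1) = 0"
    using eigen[of "2 * m + 1"] by (simp add: algebra_simps)
  then have last: "c (2 * m + 1) = 0"
    using Suc.prems(2)[of ?K] by simp
  have "step_laplacian ?K c (2 * m) = c (2 * m) - c (2 * m + 1)"
    by (simp add: step_laplacian_def step_adj_def max_def)
  then have "(1 - x) * c (2 * m) = 0"
    using eigen[of "2 * m"] last by (simp add: algebra_simps)
  then have second_last: "c (2 * m) = 0"
    using Suc.prems(2)[of 1] by simp
  have lower: "c t = 0" if "t < 2 * m" for t
  proof (rule Suc.IH[of "x - 1"])
    show "step_laplacian (2 * m) c t = (x - 1) * c t" if "t < 2 * m" for t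
      using eigen[of t] step_laplacian_Suc_Suc[OF that, of c] last that by (simp add: algebra_simps)
    show "x - 1 \<noteq> real j" if "j \<le> 2 * m" for j
      using Suc.prems(2)[of "j + 1"] that by simp
  qed (use that in simp)
  show ?case
    using Suc.prems(3) lower last second_last by (cases "t < 2 * m") (auto simp: less_Suc_eq)
qed

lemma step_laplacian_top_eigen:
  fixes K :: nat
  defines "c \<equiv> \<lambda>s. if s = K then real K else -1"
  assumes "odd K" and "t \<le> K"
  shows "step_laplacian (K + 1) c t = real (K + 1) * c t"
proof (cases "t = K")
  case True
  have "step_laplacian (K + 1) c K = (\<Sum>s<K. if step_adj K s then c K - c s else 0)"
    by (simp add: step_laplacian_def)
  also have "\<dots> = (\<Sum>s<K. real K + 1)"
    using assms(2) by (intro sum.cong) (auto simp: step_adj_def c_def max_def)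
  also have "\<dots> = real (K + 1) * c K"
    by (simp add: c_def algebra_simps)
  finally show ?thesis
    using True by simp
next
  case False
  then have "t < K" using assms(3) by simp
  moreover have "(\<Sum>s<K. if step_adj t s then c t - c s else 0) = 0"
    using \<open>t < K\<close> by (intro sum.neutral) (auto simp: c_def)
  ultimately have "step_laplacian (K + 1) c t = c t - c K"
    using step_adj_below_odd[OF \<open>t < K\<close> assms(2)] by (simp add: step_laplacian_def)
  then show ?thesis
    using \<open>t < K\<close> by (simp add: c_def algebra_simps)
qed

lemma step_laplacian_one_eigen:
  fixes K :: nat
  defines "c \<equiv> \<lambda>s. if s < K then 1 else if s = K then - real K else 0"
  assumes "even K" and "t < K + 2"
  shows "step_laplacian (K + 2) c t = c t"
proof -
  have split: "step_laplacian (K + 2) c t = (\<Sum>s<K. if step_adj t s then c t - c s else 0)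
      + (if step_adj t K then c t - c K else 0) + (if step_adj t (K + 1) then c t - c (K + 1) else 0)"
    by (simp add: step_laplacian_def)
  consider "t < K" | "t = K" | "t = K + 1"
    using assms(3) by linarith
  then show ?thesis
  proof cases
    case 1
    have "(\<Sum>s<K. if step_adj t s then c t - c s else 0) = 0"
      using 1 by (intro sum.neutral) (auto simp: c_def)
    then show ?thesis
      using 1 assms(2) split step_adj_below_even[of t K] step_adj_below_odd[of t "K + 1"]
      by (simp add: c_def)
  next
    case 2
    have "(\<Sum>s<K. if step_adj t s then c t - c s else 0) = 0"
      using 2 assms(2) by (intro sum.neutral) (auto simp: step_adj_def max_def)
    then show ?thesis
      using 2 assms(2) split step_adj_below_odd[of t "K + 1"] by (simp add: c_def)
  next
    case 3
    have "(\<Sum>s<K. if step_adj t s then c t - c s else 0) = (\<Sum>s<K. -1)"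
      using 3 assms(2) by (intro sum.cong) (auto simp: step_adj_def max_def c_def)
    then show ?thesis
      using 3 assms(2) split step_adj_sym[of t K] step_adj_below_odd[of K "K + 1"]
      by (simp add: c_def)
  qed
qed

definition block_degree :: "nat \<Rightarrow> nat \<Rightarrow> nat" where
  "block_degree k t = (\<Sum>s<k. if step_adj t s then 1 else 0)"

lemma block_degree_Suc_Suc:
  assumes "t < 2 * m"
  shows "block_degree (2 * m + 2) t = block_degree (2 * m) t + 1"
  using assms step_adj_below_even[of t "2 * m"] step_adj_below_odd[of t "2 * m + 1"]
  by (simp add: block_degree_def)

lemma block_degree_eq:
  "t < 2 * m \<Longrightarrow> block_degree (2 * m) t = (if even t then m - t div 2 + 1 else m + t div 2)"
proof (induction m)
  case 0
  then show ?case by simp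
next
  case (Suc m)
  have "t < 2 * m + 2" using Suc.prems by simp
  then consider "t < 2 * m" | "t = 2 * m" | "t = 2 * m + 1" by linarith
  then show ?case
  proof cases
    case 1
    then show ?thesis
      using Suc.IH block_degree_Suc_Suc[of t m] by (auto simp: mult_Suc_right)
  next
    case 2
    have "block_degree (2 * m + 2) t = 2"
      using 2 by (simp add: block_degree_def step_adj_def max_def)
    then show ?thesis using 2 by (simp add: mult_Suc_right)
  next
    case 3
    have "block_degree (2 * m + 2) t = (\<Sum>s<2 * m + 1. 1)"
      using 3 by (simp add: block_degree_def step_adj_def max_def)
    then show ?thesis using 3 by (simp add: mult_Suc_right)
  qed
qed

lemma block_degree_le: "block_degree k t \<le> k"
proof -
  have "block_degree k t \<le> (\<Sum>s<k. 1)"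
    unfolding block_degree_def by (intro sum_mono) simp
  then show ?thesis by simp
qed

lemma ex_block_degree_eq:
  assumes "k = 2 * m" and "j < k" and "2 \<le> j \<or> m \<le> j"
  shows "\<exists>t<k. block_degree k t = j"
proof (cases "m \<le> j")
  case True
  let ?t = "2 * (j - m) + 1"
  have "?t < k" "block_degree k ?t = j"
    using assms True block_degree_eq[of ?t m] by auto
  then show ?thesis by blast
next
  case False
  let ?t = "2 * (m - j + 1)"
  have "?t < k" "block_degree k ?t = j"
    using assms False block_degree_eq[of ?t m] by auto
  then show ?thesis by blast
qed

section \<open>The Laplacian of C(alpha_1, ..., alpha_k)\<close>

lemma C_adj_prefix_iff:
  "fst u < m \<Longrightarrow> fst v < m \<Longrightarrow> C_adj_prefix as m u v \<longleftrightarrow>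
    u \<noteq> v \<and> (if fst u = fst v then odd (m - 1 - fst u) else even (m - 1 - max (fst u) (fst v)))"
proof (induction as m u v rule: C_adj_prefix.induct)
  case (3 as i u v)
  show ?case
  proof (cases "fst u \<le> i \<and> fst v \<le> i")
    case True
    then show ?thesis
      using "3.IH" by (auto simp: max_def Suc_diff_le)
  next
    case False
    then have "fst u = Suc i \<or> fst v = Suc i"
      using "3.prems" by linarith
    then show ?thesis
      using "3.prems" False by (elim disjE; cases "fst u = fst v"; simp add: max_def)
  qed
qed simp_all

lemma C_adj_prefix_irrefl: "\<not> C_adj_prefix as m u u"
  by (cases "(as, m, u, u)" rule: C_adj_prefix.cases) auto

lemma C_adj_iff:
  assumes "even (length as)"
  shows "C_adj as u v \<longleftrightarrow>
    u \<in> C_vertices as \<and> v \<in> C_vertices as \<and> u \<noteq> v \<and> step_adj (fst u) (fst v)"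
proof -
  have parity: "odd (length as - 1 - x) \<longleftrightarrow> even x" if "x < length as" for x
  proof -
    have "(length as - 1 - x) + x + 1 = length as"
      using that by simp
    then show ?thesis
      using assms by (metis even_add odd_one)
  qed
  have "C_adj_prefix as (length as) u v \<longleftrightarrow> u \<noteq> v \<and> step_adj (fst u) (fst v)"
    if "fst u < length as" "fst v < length as"
  proof -
    have "max (fst u) (fst v) < length as"
      using that by simp
    then have "even (length as - 1 - max (fst u) (fst v)) \<longleftrightarrow> odd (max (fst u) (fst v))"
      using parity by blast
    then show ?thesis
      unfolding C_adj_prefix_iff[OF that] step_adj_def using parity[OF that(1)] by presburger
  qed
  then show ?thesis
    by (auto simp: C_adj_def C_vertices_def)
qed

lemma set_C_vlist: "set (C_vlist as) = C_vertices as"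
  by (auto simp: C_vlist_def C_vertices_def)

lemma distinct_C_vlist: "distinct (C_vlist as)"
proof -
  have "distinct (concat (map (\<lambda>i. map (\<lambda>j. (i, j)) [0..<as ! i]) [0..<n]))" for n
    by (induction n) (auto simp: distinct_map inj_on_def)
  then show ?thesis
    by (simp add: C_vlist_def)
qed

lemma C_degree_nth:
  assumes "a < length (C_vlist as)"
  defines "vs \<equiv> C_vlist as"
  shows "C_degree as (vs ! a) = card {b \<in> {..<length vs}. C_adj as (vs ! a) (vs ! b)}"
proof -
  have "{v \<in> C_vertices as. C_adj as (vs ! a) v}
      = (!) vs ` {b \<in> {..<length vs}. C_adj as (vs ! a) (vs ! b)}"
    by (force simp: vs_def set_C_vlist[symmetric] in_set_conv_nth)
  moreover have "inj_on ((!) vs) {b \<in> {..<length vs}. C_adj as (vs ! a) (vs ! b)}"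
    by (rule inj_on_nth) (auto simp: vs_def distinct_C_vlist)
  ultimately show ?thesis
    by (simp add: C_degree_def card_image)
qed

lemma C_laplacian_mult_vec:
  assumes "a < length (C_vlist as)" and "dim_vec v = length (C_vlist as)"
  defines "vs \<equiv> C_vlist as"
  shows "(C_laplacian as *\<^sub>v v) $ a =
    (\<Sum>b<length vs. if C_adj as (vs ! a) (vs ! b) then v $ a - v $ b else 0)"
proof -
  define F where "F = {b \<in> {..<length vs}. C_adj as (vs ! a) (vs ! b)}"
  have F_sub: "F \<subseteq> {..<length vs}"
    by (auto simp: F_def)
  have "(C_laplacian as *\<^sub>v v) $ a =
      (\<Sum>b<length vs. (if a = b then real (card F) else if b \<in> F then -1 else 0) * v $ b)"
    using assms C_degree_nth[OF assms(1)]
    by (auto simp: C_laplacian_def Let_def F_def vs_def scalar_prod_def lessThan_atLeast0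
        intro!: sum.cong)
  also have "\<dots> = (\<Sum>b<length vs.
      (if a = b then real (card F) * v $ a else 0) - (if b \<in> F then v $ b else 0))"
    by (intro sum.cong) (auto simp: F_def C_adj_def C_adj_prefix_irrefl)
  also have "\<dots> = real (card F) * v $ a - (\<Sum>b\<in>F. v $ b)"
    using assms(1) F_sub by (simp add: sum_subtractf vs_def sum.inter_restrict[symmetric] Int_absorb1)
  also have "\<dots> = (\<Sum>b<length vs. if b \<in> F then v $ a - v $ b else 0)"
    using F_sub by (simp add: sum_subtractf sum.inter_restrict[symmetric] Int_absorb1)
  also have "\<dots> = (\<Sum>b<length vs. if C_adj as (vs ! a) (vs ! b) then v $ a - v $ b else 0)"
    by (intro sum.cong) (auto simp: F_def)
  finally show ?thesis .
qed

section \<open>Block coordinates for C(p, ..., p)\<close>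

lemma C_vlist_replicate: "C_vlist (replicate k p) = map (\<lambda>b. (b div p, b mod p)) [0..<k * p]"
proof -
  have "C_vlist (replicate k p) = concat (map (\<lambda>i. map (\<lambda>j. (i, j)) [0..<p]) [0..<k])"
    unfolding C_vlist_def by (auto intro!: arg_cong[where f = concat])
  also have "\<dots> = map (\<lambda>b. (b div p, b mod p)) [0..<k * p]"
  proof (induction k)
    case (Suc k)
    have "[0..<Suc k * p] = [0..<k * p] @ [k * p..<k * p + p]"
      using upt_add_eq_append[OF le0, of "k * p" p] by (simp add: add.commute)
    moreover have "map (\<lambda>b. (b div p, b mod p)) [k * p..<k * p + p] = map (\<lambda>j. (k, j)) [0..<p]"
      by (rule nth_equalityI) auto
    ultimately show ?case
      using Suc by simp
  qed simp
  finally show ?thesis .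
qed

lemma dim_C_laplacian_replicate:
  "dim_row (C_laplacian (replicate k p)) = k * p" "dim_col (C_laplacian (replicate k p)) = k * p"
  by (simp_all add: C_laplacian_def Let_def C_vlist_replicate)

lemma sum_blocks:
  fixes f :: "nat \<Rightarrow> 'a::comm_monoid_add"
  shows "(\<Sum>b<k * p. f b) = (\<Sum>s<k. \<Sum>i<p. f (s * p + i))"
proof -
  have "(\<Sum>i<p. f (s * p + i)) = sum f {s * p..<s * p + p}" for s
    using sum.shift_bounds_nat_ivl[of f 0 "s * p" p] by (simp add: lessThan_atLeast0 add.commute)
  then show ?thesis
    by (simp add: sum.nat_group)
qed

lemma block_index_less:
  fixes s i k p :: nat
  assumes "s < k" and "i < p"
  shows "s * p + i < k * p"
proof -
  have "s * p + i < (s + 1) * p"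
    using assms(2) by simp
  also have "\<dots> \<le> k * p"
    using assms(1) by (intro mult_le_mono1) simp
  finally show ?thesis .
qed

text \<open>The Laplacian of C(p, ..., p) in the coordinates w t j = v $ (t * p + j). Since
  \<open>step_adj t t\<close> holds for clique steps, the sum includes s = t, i = j, whose summand is 0.\<close>

definition block_laplacian ::
    "nat \<Rightarrow> nat \<Rightarrow> (nat \<Rightarrow> nat \<Rightarrow> real) \<Rightarrow> nat \<Rightarrow> nat \<Rightarrow> real" where
  "block_laplacian k p w t j = (\<Sum>s<k. if step_adj t s then (\<Sum>i<p. w t j - w s i) else 0)"

lemma C_laplacian_replicate_mult_vec:
  assumes "even k" and "t < k" and "j < p" and "dim_vec v = k * p"
  shows "(C_laplacian (replicate k p) *\<^sub>v v) $ (t * p + j)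
    = block_laplacian k p (\<lambda>s i. v $ (s * p + i)) t j"
proof -
  let ?as = "replicate k p"
  have "(C_laplacian ?as *\<^sub>v v) $ (t * p + j) =
      (\<Sum>b<k * p. if C_adj ?as (t, j) (b div p, b mod p) then v $ (t * p + j) - v $ b else 0)"
    using C_laplacian_mult_vec[of "t * p + j" ?as v] assms block_index_less[OF assms(2,3)]
    by (simp add: C_vlist_replicate)
  also have "\<dots> = block_laplacian k p (\<lambda>s i. v $ (s * p + i)) t j"
    unfolding sum_blocks block_laplacian_def using assms
    by (intro sum.cong) (auto simp: C_adj_iff C_vertices_def intro!: sum.cong sum.neutral)
  finally show ?thesis .
qed

lemma block_laplacian_eq:
  "block_laplacian k p w t j = real p * real (block_degree k t) * w t j
     - (\<Sum>s<k. if step_adj t s then (\<Sum>i<p. w s i) else 0)"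
proof -
  have "block_laplacian k p w t j
      = (\<Sum>s<k. (if step_adj t s then real p * w t j else 0)
          - (if step_adj t s then (\<Sum>i<p. w s i) else 0))"
    unfolding block_laplacian_def by (intro sum.cong) (auto simp: sum_subtractf)
  also have "(\<Sum>s<k. if step_adj t s then real p * w t j else 0) = real p * real (block_degree k t) * w t j"
    unfolding block_degree_def of_nat_sum sum_distrib_left sum_distrib_right by (intro sum.cong) auto
  ultimately show ?thesis
    by (simp add: sum_subtractf)
qed

lemma block_laplacian_const: "block_laplacian k p (\<lambda>s i. c s) t j = real p * step_laplacian k c t"
  unfolding block_laplacian_def step_laplacian_def sum_distrib_left by (intro sum.cong) auto

lemma block_index_div_mod_less:
  fixes a k p :: nat
  assumes "a < k * p"
  shows "a div p < k" and "a mod p < p"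
proof -
  have "p > 0"
    using assms by (cases p) auto
  then show "a div p < k" "a mod p < p"
    using assms by (simp_all add: less_mult_imp_div_less)
qed

lemma eigenvalue_C_laplacian_replicateE:
  assumes "even k" and "eigenvalue (C_laplacian (replicate k p)) \<mu>"
  obtains w where "\<exists>t<k. \<exists>j<p. w t j \<noteq> 0"
    and "\<And>t j. t < k \<Longrightarrow> j < p \<Longrightarrow> block_laplacian k p w t j = \<mu> * w t j"
proof -
  let ?L = "C_laplacian (replicate k p)"
  from assms(2) obtain v where "eigenvector ?L v \<mu>"
    unfolding eigenvalue_def ..
  then have v: "dim_vec v = k * p" "v \<noteq> 0\<^sub>v (k * p)" "?L *\<^sub>v v = \<mu> \<cdot>\<^sub>v v"
    unfolding eigenvector_def dim_C_laplacian_replicate by auto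
  obtain a where a: "a < k * p" "v $ a \<noteq> 0"
    using v(1,2) by (auto simp: vec_eq_iff)
  then have "v $ (a div p * p + a mod p) \<noteq> 0"
    by simp
  then have "\<exists>t<k. \<exists>j<p. v $ (t * p + j) \<noteq> 0"
    using block_index_div_mod_less[OF a(1)] by blast
  moreover have "block_laplacian k p (\<lambda>s i. v $ (s * p + i)) t j = \<mu> * v $ (t * p + j)"
    if "t < k" "j < p" for t j
  proof -
    have "(?L *\<^sub>v v) $ (t * p + j) = \<mu> * v $ (t * p + j)"
      using v(1,3) block_index_less[OF that] by simp
    then show ?thesis
      using C_laplacian_replicate_mult_vec[OF assms(1) that v(1)] by simp
  qed
  ultimately show ?thesis
    using that[of "\<lambda>s i. v $ (s * p + i)"] by simp
qed

lemma eigenvalue_C_laplacian_replicateI: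
  assumes "even k" and "t0 < k" and "j0 < p" and "w t0 j0 \<noteq> 0"
    and eigen: "\<And>t j. t < k \<Longrightarrow> j < p \<Longrightarrow> block_laplacian k p w t j = \<mu> * w t j"
  shows "eigenvalue (C_laplacian (replicate k p)) \<mu>"
proof -
  let ?L = "C_laplacian (replicate k p)"
  define V where "V = vec (k * p) (\<lambda>b. w (b div p) (b mod p))"
  have V_block: "V $ (s * p + i) = w s i" if "s < k" "i < p" for s i
    using that block_index_less[OF that] by (simp add: V_def)
  have "V \<noteq> 0\<^sub>v (k * p)"
    using V_block[OF assms(2,3)] assms(4) block_index_less[OF assms(2,3)] by auto
  moreover have "?L *\<^sub>v V = \<mu> \<cdot>\<^sub>v V"
  proof (rule eq_vecI)
    fix a
    assume "a < dim_vec (\<mu> \<cdot>\<^sub>v V)"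
    then have a: "a < k * p"
      by (simp add: V_def)
    define t j where "t = a div p" and "j = a mod p"
    have tj: "t < k" "j < p"
      using block_index_div_mod_less[OF a] by (simp_all add: t_def j_def)
    have a_eq: "a = t * p + j"
      by (simp add: t_def j_def)
    have "(?L *\<^sub>v V) $ (t * p + j) = block_laplacian k p (\<lambda>s i. V $ (s * p + i)) t j"
      using C_laplacian_replicate_mult_vec[OF assms(1) tj] by (simp add: V_def)
    also have "\<dots> = block_laplacian k p w t j"
      using V_block tj by (auto simp: block_laplacian_def intro!: sum.cong)
    also have "\<dots> = (\<mu> \<cdot>\<^sub>v V) $ (t * p + j)"
      using eigen tj V_block block_index_less[OF tj] by (simp add: V_def)
    finally show "(?L *\<^sub>v V) $ a = (\<mu> \<cdot>\<^sub>v V) $ a"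
      unfolding a_eq .
  qed (simp add: V_def dim_C_laplacian_replicate)
  ultimately have "eigenvector ?L V \<mu>"
    unfolding eigenvector_def dim_C_laplacian_replicate by (simp add: V_def)
  then show ?thesis
    unfolding eigenvalue_def ..
qed

lemma block_laplacian_eigen_const:
  assumes "0 < p" and "j < p" and "\<mu> \<noteq> real p * real (block_degree k t)"
    and "block_laplacian k p w t j = \<mu> * w t j" and "block_laplacian k p w t 0 = \<mu> * w t 0"
  shows "w t j = w t 0"
proof -
  define S where "S = (\<Sum>s<k. if step_adj t s then (\<Sum>i<p. w s i) else 0)"
  have "(real p * real (block_degree k t) - \<mu>) * w t i = S"
    if "block_laplacian k p w t i = \<mu> * w t i" for i
    using that by (simp add: block_laplacian_eq S_def algebra_simps)
  then have "(real p * real (block_degree k t) - \<mu>) * (w t j - w t 0) = 0"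
    using assms(4,5) by (simp add: algebra_simps)
  then show ?thesis
    using assms(3) by simp
qed

section \<open>The spectrum of C(p, ..., p)\<close>

lemma eigenvalue_C_laplacian_replicate_imp_multiple:
  assumes "even k" and "p > 0" and "eigenvalue (C_laplacian (replicate k p)) \<mu>"
  shows "\<exists>j\<le>k. \<mu> = real (j * p)"
proof (rule ccontr)
  assume not_multiple: "\<not> (\<exists>j\<le>k. \<mu> = real (j * p))"
  obtain w where w_nonzero: "\<exists>t<k. \<exists>j<p. w t j \<noteq> 0"
    and w_eigen: "\<And>t j. t < k \<Longrightarrow> j < p \<Longrightarrow> block_laplacian k p w t j = \<mu> * w t j"
    using eigenvalue_C_laplacian_replicateE[OF assms(1,3)] by blast
  define c where "c = (\<lambda>t. w t 0)"
  have w_const: "w t j = c t" if "t < k" "j < p" for t j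
  proof -
    have "\<mu> \<noteq> real (block_degree k t * p)"
      using not_multiple block_degree_le[of k t] by blast
    then show ?thesis
      unfolding c_def using assms(2) that w_eigen[OF that] w_eigen[OF that(1) assms(2)]
      by (intro block_laplacian_eigen_const) (simp_all add: mult.commute)
  qed
  have step_eigen: "step_laplacian k c t = (\<mu> / real p) * c t" if "t < k" for t
  proof -
    have "block_laplacian k p w t 0 = block_laplacian k p (\<lambda>s i. c s) t 0"
      unfolding block_laplacian_def using w_const that assms(2) by (auto intro!: sum.cong)
    then have "real p * step_laplacian k c t = \<mu> * c t"
      using w_eigen that assms(2) by (simp add: block_laplacian_const c_def)
    then show ?thesis
      using assms(2) by (simp add: field_simps)
  qed
  have not_integer: "\<mu> / real p \<noteq> real j" if "j \<le> k" for j
    using not_multiple that assms(2) by (auto simp: field_simps)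
  obtain m where k: "k = 2 * m"
    using assms(1) by blast
  have c_zero: "c t = 0" if "t < k" for t
    using step_eigen not_integer that unfolding k by (rule step_laplacian_eigen_imp_zero)
  obtain t j where "t < k" "j < p" "w t j \<noteq> 0"
    using w_nonzero by blast
  then show False
    using w_const c_zero by simp
qed

lemma eigenvalue_C_laplacian_replicate_block_degree:
  assumes "even k" and "p \<ge> 2" and "t0 < k"
  shows "eigenvalue (C_laplacian (replicate k p)) (real p * real (block_degree k t0))"
proof -
  define w :: "nat \<Rightarrow> nat \<Rightarrow> real"
    where "w t j = (if t = t0 then (if j = 0 then 1 else 0) - (if j = 1 then 1 else 0) else 0)" for t j
  have w_sum: "(\<Sum>i<p. w s i) = 0" for s
    using assms(2) by (cases "s = t0") (simp_all add: w_def sum_subtractf sum.delta)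
  show ?thesis
  proof (rule eigenvalue_C_laplacian_replicateI[OF assms(1,3)])
    show "0 < p" "w t0 0 \<noteq> 0"
      using assms(2) by (simp_all add: w_def)
    show "block_laplacian k p w t j = real p * real (block_degree k t0) * w t j" for t j
      unfolding block_laplacian_eq w_sum by (simp add: w_def)
  qed
qed

lemma eigenvalue_C_laplacian_replicate_step:
  assumes "even k" and "p > 0" and "t0 < k" and "c t0 \<noteq> 0"
    and "\<And>t. t < k \<Longrightarrow> step_laplacian k c t = x * c t"
  shows "eigenvalue (C_laplacian (replicate k p)) (real p * x)"
  using assms by (intro eigenvalue_C_laplacian_replicateI[where w = "\<lambda>s i. c s"])
    (simp_all add: block_laplacian_const)

lemma eigenvalue_C_laplacian_replicate_multiple:
  assumes "even k" and "k \<ge> 2" and "p \<ge> 2" and "j \<le> k"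
  shows "eigenvalue (C_laplacian (replicate k p)) (real (j * p))"
proof -
  obtain m where k: "k = 2 * m"
    using assms(1) by blast
  have p: "p > 0"
    using assms(3) by simp
  note step_eigenvalue = eigenvalue_C_laplacian_replicate_step[OF assms(1) p]
  \<comment> \<open>for k = 2 the eigenvalue p is not a step eigenvalue but p times \<open>block_degree 2 1 = 1\<close>\<close>
  consider "j = 0" | "j = k" | "j = 1" "k \<ge> 4" | "j < k" "2 \<le> j \<or> m \<le> j"
    using assms k by linarith
  then show ?thesis
  proof cases
    case 1
    have "step_laplacian k (\<lambda>_. 1) t = 0" for t
      by (simp add: step_laplacian_def cong: if_cong)
    then have "eigenvalue (C_laplacian (replicate k p)) (real p * 0)"
      using assms(2) by (intro step_eigenvalue[of 0 "\<lambda>_. 1"]) simp_all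
    then show ?thesis
      using 1 by simp
  next
    case 2
    define K where "K = 2 * (m - 1) + 1"
    have K: "k = K + 1" "odd K"
      using assms(2) k by (simp_all add: K_def)
    have "eigenvalue (C_laplacian (replicate k p)) (real p * real (K + 1))"
      using K step_laplacian_top_eigen[OF K(2)] odd_pos[OF K(2)]
      by (intro step_eigenvalue[of K "\<lambda>s. if s = K then real K else -1"]) auto
    then show ?thesis
      using 2 K by (simp add: mult.commute distrib_left)
  next
    case 3
    define K where "K = 2 * (m - 1)"
    have K: "k = K + 2" "even K" "K \<ge> 2"
      using 3 k by (simp_all add: K_def)
    have "eigenvalue (C_laplacian (replicate k p)) (real p * 1)"
      using K step_laplacian_one_eigen[OF K(2)]
      by (intro step_eigenvalue[of 0 "\<lambda>s. if s < K then 1 else if s = K then - real K else 0"]) auto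
    then show ?thesis
      using 3 by simp
  next
    case 4
    then obtain t where "t < k" and degree: "block_degree k t = j"
      using ex_block_degree_eq[OF k] by blast
    then show ?thesis
      using eigenvalue_C_laplacian_replicate_block_degree[OF assms(1,3) \<open>t < k\<close>]
      by (simp add: degree mult.commute)
  qed
qed

theorem theorem3p2:
  fixes k p :: nat
  assumes "k \<ge> 2" and "even k" and "p \<ge> 2"
  shows "m_lap (replicate k p) = k + 1"
proof -
  have "{x. eigenvalue (C_laplacian (replicate k p)) x} = (\<lambda>j. real (j * p)) ` {..k}"
  proof (intro equalityI subsetI)
    fix x
    assume "x \<in> {x. eigenvalue (C_laplacian (replicate k p)) x}"
    then have "\<exists>j\<le>k. x = real (j * p)"
      using eigenvalue_C_laplacian_replicate_imp_multiple[OF assms(2)] assms(3) by simp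
    then show "x \<in> (\<lambda>j. real (j * p)) ` {..k}"
      by auto
  next
    fix x
    assume "x \<in> (\<lambda>j. real (j * p)) ` {..k}"
    then show "x \<in> {x. eigenvalue (C_laplacian (replicate k p)) x}"
      using eigenvalue_C_laplacian_replicate_multiple[OF assms(2,1,3)] by auto
  qed
  moreover have "inj_on (\<lambda>j. real (j * p)) {..k}"
    using assms(3) by (intro inj_onI) simp
  ultimately show ?thesis
    unfolding m_lap_def by (simp add: card_image)
qed

end
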